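(* Let $a,q\ge1$ be integers, let $H=(L\cup R,E(H))$ be a bipartite graph with $|L|=|R|=a$ containing no cycle of length less than $6$ (chosen with the maximum number of edges), $m=|E(H)|$, and let $G=G(E_A,E_B)$ be the directed graph constructed from $E_A,E_B\in\{0,1\}^m$ as in the context. (1) If $E_A\cap E_B\neq\emptyset$ (i.e. there is $j$ with $E_A[j]=E_B[j]=1$), then the girth of $G$ equals $2q$. (2) If $E_A\cap E_B=\emptyset$, then the girth of $G$ is at least $6q$.
   Context: Fix an ordering $E(H)=\{e_1,\dots,e_m\}$ with each $e_j=(l,r)$, $l\in L$, $r\in R$. The graph $G(E_A,E_B)$: for each $i\in\{1,\dots,q\}$ make a copy $l_i$ of every $l\in L$ and a copy $r_i$ of every $r\in R$ (layer $i$ is $L_i\cup R_i$). Pipes: for every $r\in R$ the directed path $r_1\to r_2\to\dots\to r_q$, and for every $l\in L$ the directed path $l_q\to l_{q-1}\to\dots\to l_1$. Input-dependent edges: for each $j$ with $e_j=(l,r)$, if $E_A[j]=1$ add the directed edge $(l_1,r_1)$, and if $E_B[j]=1$ add the directed edge $(r_q,l_q)$. Shortcut tree: a balanced binary tree $T$ with $q$ leaves $t_1,\dots,t_q$, tree edges oriented toward the leaves, plus a directed edge from every vertex of $L_i\cup R_i$ to $t_i$ for each $i$. The girth of $G$ is the length of a shortest directed cycle. *)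

theory Defs
  imports Main "HOL-Library.Extended_Nat"
begin

text \<open>L = {0..<a} (vertices Inl l), R = {0..<a} (vertices Inr r); an edge set
  F \<subseteq> L \<times> R, an edge (l,r) joins Inl l and Inr r.\<close>

definition bip_adj :: "(nat \<times> nat) set \<Rightarrow> nat + nat \<Rightarrow> nat + nat \<Rightarrow> bool" where
  "bip_adj F u v \<longleftrightarrow> (\<exists>l r. (l, r) \<in> F \<and>
      ((u = Inl l \<and> v = Inr r) \<or> (u = Inr r \<and> v = Inl l)))"

definition ucycle :: "('v \<Rightarrow> 'v \<Rightarrow> bool) \<Rightarrow> 'v list \<Rightarrow> bool" where
  "ucycle adj vs \<longleftrightarrow> length vs \<ge> 3 \<and> distinct vs \<and>
     (\<forall>i < length vs. adj (vs ! i) (vs ! ((i + 1) mod length vs)))"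

definition no_short_cycle :: "(nat \<times> nat) set \<Rightarrow> bool" where
  "no_short_cycle F \<longleftrightarrow> (\<forall>vs. ucycle (bip_adj F) vs \<longrightarrow> length vs \<ge> 6)"

definition bip_edges_ok :: "nat \<Rightarrow> (nat \<times> nat) set \<Rightarrow> bool" where
  "bip_edges_ok a F \<longleftrightarrow> F \<subseteq> {..<a} \<times> {..<a}"

definition dcycle :: "('v \<Rightarrow> 'v \<Rightarrow> bool) \<Rightarrow> 'v list \<Rightarrow> bool" where
  "dcycle E vs \<longleftrightarrow> vs \<noteq> [] \<and> distinct vs \<and>
     (\<forall>i < length vs. E (vs ! i) (vs ! ((i + 1) mod length vs)))"

text \<open>Girth: length of a shortest directed cycle (\<infinity> if acyclic).\<close>
definition dgirth :: "('v \<Rightarrow> 'v \<Rightarrow> bool) \<Rightarrow> enat" where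
  "dgirth E = (INF vs \<in> {vs. dcycle E vs}. enat (length vs))"

text \<open>Lv l i = l_i, Rv r i = r_i (layers i = 1..q); Tn k = node k of the shortcut
  tree T, a balanced binary tree in heap numbering: nodes 1..2q-1, node k has
  children 2k and 2k+1, leaves are q..2q-1, and leaf t_i is node q+i-1.\<close>
datatype vert = Lv nat nat | Rv nat nat | Tn nat

text \<open>Hs is the ordering e_1..e_m of E(H) (0-based: e_{j+1} = Hs ! j),
  EA, EB are the bit vectors (EA ! j = True means E_A[j+1] = 1).\<close>
inductive Gedge :: "nat \<Rightarrow> nat \<Rightarrow> (nat \<times> nat) list \<Rightarrow> bool list \<Rightarrow> bool list
    \<Rightarrow> vert \<Rightarrow> vert \<Rightarrow> bool"
  for a q Hs EA EB where
  pipeR: "r < a \<Longrightarrow> 1 \<le> i \<Longrightarrow> i < q \<Longrightarrow> Gedge a q Hs EA EB (Rv r i) (Rv r (i + 1))"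
| pipeL: "l < a \<Longrightarrow> 1 \<le> i \<Longrightarrow> i < q \<Longrightarrow> Gedge a q Hs EA EB (Lv l (i + 1)) (Lv l i)"
| edgeA: "j < length Hs \<Longrightarrow> Hs ! j = (l, r) \<Longrightarrow> EA ! j \<Longrightarrow>
           Gedge a q Hs EA EB (Lv l 1) (Rv r 1)"
| edgeB: "j < length Hs \<Longrightarrow> Hs ! j = (l, r) \<Longrightarrow> EB ! j \<Longrightarrow>
           Gedge a q Hs EA EB (Rv r q) (Lv l q)"
| tree: "1 \<le> k \<Longrightarrow> c \<in> {2 * k, 2 * k + 1} \<Longrightarrow> c \<le> 2 * q - 1 \<Longrightarrow>
           Gedge a q Hs EA EB (Tn k) (Tn c)"
| shortL: "l < a \<Longrightarrow> 1 \<le> i \<Longrightarrow> i \<le> q \<Longrightarrow> Gedge a q Hs EA EB (Lv l i) (Tn (q + i - 1))"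
| shortR: "r < a \<Longrightarrow> 1 \<le> i \<Longrightarrow> i \<le> q \<Longrightarrow> Gedge a q Hs EA EB (Rv r i) (Tn (q + i - 1))"

end

theory Submission
  imports Defs
begin

(* No directed cycle meets the shortcut tree: edges leaving a tree node lead to tree nodes of
   larger heap index. Every other edge advances the position along
   r_1 -> ... -> r_q -> l_q -> ... -> l_1 by one modulo 2q, so a cycle is a concatenation of rounds of length 2q, each entering the
   left side through an E_B edge (l, r) and leaving it through an E_A edge (l, r'). A single
   round closes only if (l, r) lies in both E_A and E_B, which also yields a cycle of length
   2q. Two rounds closing up give edges (l0,r0), (l0,r1), (l1,r1), (l1,r0) of H with
   r0 \<noteq> r1 and l0 \<noteq> l1, i.e. a 4-cycle, which H does not have. *)

lemma dgirth_le: "dcycle E vs \<Longrightarrow> dgirth E \<le> enat (length vs)"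
  unfolding dgirth_def by (rule INF_lower) simp

lemma dgirth_geI: "(\<And>vs. dcycle E vs \<Longrightarrow> k \<le> length vs) \<Longrightarrow> enat k \<le> dgirth E"
  unfolding dgirth_def by (rule INF_greatest) simp

locale dcycle_walk =
  fixes E :: "'v \<Rightarrow> 'v \<Rightarrow> bool" and vs :: "'v list"
  assumes dcycle: "dcycle E vs"
begin

definition walk :: "nat \<Rightarrow> 'v" where
  "walk t = vs ! (t mod length vs)"

lemma length_pos: "0 < length vs"
  using dcycle unfolding dcycle_def by simp

lemma walk_step: "E (walk t) (walk (Suc t))"
proof -
  have "t mod length vs < length vs" using length_pos by simp
  then have "E (vs ! (t mod length vs)) (vs ! ((t mod length vs + 1) mod length vs))"
    using dcycle unfolding dcycle_def by blast
  then show ?thesis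
    unfolding walk_def by (simp add: mod_Suc_eq)
qed

lemma walk_periodic: "walk (t + length vs) = walk t"
  unfolding walk_def by simp

lemma walk_eq_iff: "walk t = walk t' \<longleftrightarrow> t mod length vs = t' mod length vs"
  using dcycle length_pos unfolding dcycle_def walk_def by (simp add: nth_eq_iff_index_eq)

lemma walk_shift_neq: "0 < d \<Longrightarrow> d < length vs \<Longrightarrow> walk (t + d) \<noteq> walk t"
  unfolding walk_eq_iff by (metis add_diff_cancel_left' dvd_imp_le le_add1 leD mod_eq_dvd_iff_nat)

lemma walk_pred: "E (walk (t + length vs - 1)) (walk t)"
  using walk_step[of "t + length vs - 1"] length_pos walk_periodic[of t] by simp

lemma walk_avoids_ranked:
  fixes rank :: "'v \<Rightarrow> nat"
  assumes ranked: "\<And>u v. E u v \<Longrightarrow> u \<in> S \<Longrightarrow> v \<in> S \<and> rank u < rank v"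
  shows "walk t \<notin> S"
proof
  assume "walk t \<in> S"
  have "walk (t + s) \<in> S \<and> rank (walk t) + s \<le> rank (walk (t + s))" for s
  proof (induction s)
    case (Suc s)
    then show ?case using ranked[OF walk_step[of "t + s"]] by fastforce
  qed (simp add: \<open>walk t \<in> S\<close>)
  from this[of "length vs"] show False
    using walk_periodic length_pos by simp
qed

context
  fixes ph :: "'v \<Rightarrow> nat" and p :: nat
  assumes p_pos: "0 < p"
    and phase_step: "\<And>t. ph (walk (Suc t)) = Suc (ph (walk t)) mod p"
begin

lemma phase_less: "ph (walk t) < p"
  using phase_step[of "t + length vs - 1"] length_pos p_pos walk_periodic[of t] by simp

lemma phase_walk: "ph (walk (t + s)) = (ph (walk t) + s) mod p"
proof (induction s)
  case 0
  then show ?case using phase_less by simp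
next
  case (Suc s)
  then show ?case using phase_step[of "t + s"] by (simp add: mod_Suc_eq)
qed

lemma dvd_length_by_phase: "p dvd length vs"
proof -
  have "ph (walk 0) = (ph (walk 0) + length vs) mod p"
    using phase_walk[of 0 "length vs"] walk_periodic[of 0] by simp
  then have "(ph (walk 0) + length vs) mod p = ph (walk 0) mod p"
    using phase_less by simp
  then show ?thesis by (simp add: mod_eq_dvd_iff_nat)
qed

lemma phase_zero_attained: "\<exists>t. ph (walk t) = 0"
  using phase_walk[of 0 "p - ph (walk 0)"] phase_less[of 0] by auto

end

end

definition marked :: "(nat \<times> nat) list \<Rightarrow> bool list \<Rightarrow> (nat \<times> nat) set" where
  "marked Hs X = {Hs ! j | j. j < length Hs \<and> X ! j}"

lemma marked_subset: "marked Hs X \<subseteq> set Hs"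
  unfolding marked_def by auto

lemma marked_disjoint_iff:
  "distinct Hs \<Longrightarrow> marked Hs EA \<inter> marked Hs EB = {} \<longleftrightarrow> \<not> (\<exists>j < length Hs. EA ! j \<and> EB ! j)"
  unfolding marked_def by (auto simp: nth_eq_iff_index_eq)

lemma Gedge_marked_A: "(l, r) \<in> marked Hs EA \<Longrightarrow> Gedge a q Hs EA EB (Lv l 1) (Rv r 1)"
proof -
  assume "(l, r) \<in> marked Hs EA"
  then obtain j where "j < length Hs" "Hs ! j = (l, r)" "EA ! j"
    unfolding marked_def by auto
  then show ?thesis by (rule Gedge.edgeA)
qed

lemma Gedge_marked_B: "(l, r) \<in> marked Hs EB \<Longrightarrow> Gedge a q Hs EA EB (Rv r q) (Lv l q)"
proof -
  assume "(l, r) \<in> marked Hs EB"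
  then obtain j where "j < length Hs" "Hs ! j = (l, r)" "EB ! j"
    unfolding marked_def by auto
  then show ?thesis by (rule Gedge.edgeB)
qed

lemma Gedge_from_Tn: "Gedge a q Hs EA EB (Tn k) v \<Longrightarrow> \<exists>c. v = Tn c \<and> k < c"
  by (cases rule: Gedge.cases) auto

(* The position of a vertex on the round r_1 -> ... -> r_q -> l_q -> ... -> l_1 -> r'_1. *)
fun phase :: "nat \<Rightarrow> vert \<Rightarrow> nat" where
  "phase q (Rv r i) = i - 1"
| "phase q (Lv l i) = 2 * q - i"
| "phase q (Tn k) = 0"

lemma Gedge_phase:
  "Gedge a q Hs EA EB u v \<Longrightarrow> v \<notin> range Tn \<Longrightarrow> 1 \<le> q \<Longrightarrow>
    phase q v = Suc (phase q u) mod (2 * q)"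
  by (cases rule: Gedge.cases) auto

lemma Gedge_phase_zero:
  "Gedge a q Hs EA EB u v \<Longrightarrow> v \<notin> range Tn \<Longrightarrow> 1 \<le> q \<Longrightarrow> phase q v = 0 \<Longrightarrow>
    \<exists>r. v = Rv r 1"
  by (cases rule: Gedge.cases) auto

lemma Gedge_from_Rv:
  assumes "Gedge a q Hs EA EB (Rv r i) v" "v \<notin> range Tn"
  shows "i < q \<and> v = Rv r (Suc i) \<or> i = q \<and> (\<exists>l. v = Lv l q \<and> (l, r) \<in> marked Hs EB)"
  using assms by (cases rule: Gedge.cases) (auto simp: marked_def)

lemma Gedge_from_Lv:
  assumes "Gedge a q Hs EA EB (Lv l i) v" "v \<notin> range Tn"
  shows "1 < i \<and> v = Lv l (i - 1) \<or> i = 1 \<and> (\<exists>r. v = Rv r 1 \<and> (l, r) \<in> marked Hs EA)"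
  using assms by (cases rule: Gedge.cases) (auto simp: marked_def)

lemma no_short_cycle_square_degenerate:
  assumes "no_short_cycle F"
    and "(l0, r0) \<in> F" "(l0, r1) \<in> F" "(l1, r1) \<in> F" "(l1, r0) \<in> F"
  shows "r0 = r1 \<or> l0 = l1"
proof (rule ccontr)
  let ?square = "[Inr r0, Inl l0, Inr r1, Inl l1]"
  assume "\<not> (r0 = r1 \<or> l0 = l1)"
  moreover have "bip_adj F (?square ! i) (?square ! ((i + 1) mod 4))" if "i < 4" for i
  proof -
    have "i = 0 \<or> i = 1 \<or> i = 2 \<or> i = 3" using that by auto
    then show ?thesis using assms(2-5) unfolding bip_adj_def by auto
  qed
  ultimately have "ucycle (bip_adj F) ?square"
    unfolding ucycle_def by auto
  then show False
    using assms(1) unfolding no_short_cycle_def by fastforce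
qed

lemma dcycle_through_marked_edge:
  assumes q: "1 \<le> q" and lr: "(l, r) \<in> marked Hs EA \<inter> marked Hs EB"
    and bounds: "l < a" "r < a"
  shows "dcycle (Gedge a q Hs EA EB)
           (map (\<lambda>s. if s < q then Rv r (Suc s) else Lv l (2 * q - s)) [0..<2 * q])"
proof -
  define g where "g = (\<lambda>s. if s < q then Rv r (Suc s) else Lv l (2 * q - s))"
  have inj: "inj_on g {0..<2 * q}"
    unfolding g_def by (rule inj_onI) (auto split: if_splits)
  have edge: "Gedge a q Hs EA EB (g i) (g (Suc i mod (2 * q)))" if "i < 2 * q" for i
  proof -
    consider "Suc i < q" | "Suc i = q" | "q \<le> i" "Suc i < 2 * q" | "Suc i = 2 * q"
      using \<open>i < 2 * q\<close> by linarith
    then show ?thesis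
    proof cases
      case 1
      then show ?thesis unfolding g_def using bounds Gedge.pipeR[of r a "Suc i" q] by simp
    next
      case 2
      then show ?thesis unfolding g_def using Gedge_marked_B lr q by auto
    next
      case 3
      then have "Gedge a q Hs EA EB (Lv l (2 * q - Suc i + 1)) (Lv l (2 * q - Suc i))"
        using bounds by (intro Gedge.pipeL) auto
      with 3 show ?thesis unfolding g_def by (simp add: Suc_diff_Suc)
    next
      case 4
      then have "g i = Lv l 1" "g (Suc i mod (2 * q)) = Rv r 1"
        unfolding g_def by auto
      then show ?thesis using Gedge_marked_A lr by auto
    qed
  qed
  show ?thesis
    unfolding g_def[symmetric] dcycle_def using q inj edge by (auto simp: distinct_map)
qed

locale Gedge_cycle = dcycle_walk "Gedge a q Hs EA EB" vs
  for a q :: nat and Hs :: "(nat \<times> nat) list" and EA EB :: "bool list" and vs :: "vert list" +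
  assumes q_pos: "1 \<le> q"
begin

lemma walk_not_Tn: "walk t \<notin> range Tn"
  by (rule walk_avoids_ranked[where rank = "\<lambda>v. case v of Tn k \<Rightarrow> k | _ \<Rightarrow> 0"])
    (auto dest: Gedge_from_Tn)

lemma walk_phase_step: "phase q (walk (Suc t)) = Suc (phase q (walk t)) mod (2 * q)"
  using Gedge_phase[OF walk_step walk_not_Tn q_pos] .

lemma two_q_dvd_length: "2 * q dvd length vs"
  using dvd_length_by_phase[OF _ walk_phase_step] q_pos by simp

lemma length_ge_2q: "2 * q \<le> length vs"
  using two_q_dvd_length length_pos by (simp add: dvd_imp_le)

lemma walk_hits_R1: "\<exists>t r. walk t = Rv r 1"
proof -
  obtain t where "phase q (walk t) = 0"
    using phase_zero_attained[OF _ walk_phase_step] q_pos by auto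
  then show ?thesis
    using Gedge_phase_zero[OF walk_pred walk_not_Tn q_pos] by blast
qed

lemma walk_succ_Rv:
  assumes "walk t = Rv r i"
  shows "i < q \<and> walk (Suc t) = Rv r (Suc i) \<or>
    i = q \<and> (\<exists>l. walk (Suc t) = Lv l q \<and> (l, r) \<in> marked Hs EB)"
  using Gedge_from_Rv[OF walk_step[of t, unfolded assms] walk_not_Tn] .

lemma walk_succ_Lv:
  assumes "walk t = Lv l i"
  shows "1 < i \<and> walk (Suc t) = Lv l (i - 1) \<or>
    i = 1 \<and> (\<exists>r. walk (Suc t) = Rv r 1 \<and> (l, r) \<in> marked Hs EA)"
  using Gedge_from_Lv[OF walk_step[of t, unfolded assms] walk_not_Tn] .

lemma walk_along_R: "walk t = Rv r 1 \<Longrightarrow> s < q \<Longrightarrow> walk (t + s) = Rv r (Suc s)"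
proof (induction s)
  case (Suc s)
  then show ?case using walk_succ_Rv[of "t + s" r "Suc s"] by simp
qed simp

lemma walk_along_L: "walk t = Lv l q \<Longrightarrow> s < q \<Longrightarrow> walk (t + s) = Lv l (q - s)"
proof (induction s)
  case (Suc s)
  then have "walk (t + s) = Lv l (q - s)" "1 < q - s" "q - Suc s = q - s - 1"
    by simp_all
  then show ?case using walk_succ_Lv[of "t + s" l "q - s"] by simp
qed simp

lemma walk_round:
  assumes "walk t = Rv r 1"
  shows "\<exists>l r'. (l, r) \<in> marked Hs EB \<and> (l, r') \<in> marked Hs EA \<and>
    walk (t + q) = Lv l q \<and> walk (t + 2 * q) = Rv r' 1"
proof -
  have R: "Suc (t + (q - 1)) = t + q" and L: "Suc (t + q + (q - 1)) = t + 2 * q"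
    using q_pos by simp_all
  have Rq: "walk (t + (q - 1)) = Rv r q"
    using walk_along_R[OF assms, of "q - 1"] q_pos by simp
  obtain l where l: "(l, r) \<in> marked Hs EB" "walk (t + q) = Lv l q"
    using walk_succ_Rv[OF Rq] q_pos unfolding R by auto
  have L1: "walk (t + q + (q - 1)) = Lv l 1"
    using walk_along_L[OF l(2), of "q - 1"] q_pos by simp
  obtain r' where "(l, r') \<in> marked Hs EA" "walk (t + 2 * q) = Rv r' 1"
    using walk_succ_Lv[OF L1] unfolding L by auto
  with l show ?thesis by blast
qed

lemma length_ge_6q:
  assumes disjoint: "marked Hs EA \<inter> marked Hs EB = {}"
    and no_short: "no_short_cycle (set Hs)"
  shows "6 * q \<le> length vs"
proof -
  obtain t r0 where r0: "walk t = Rv r0 1"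
    using walk_hits_R1 by blast
  obtain l0 r1 where round0: "(l0, r0) \<in> marked Hs EB" "(l0, r1) \<in> marked Hs EA"
      "walk (t + q) = Lv l0 q" "walk (t + 2 * q) = Rv r1 1"
    using walk_round[OF r0] by blast
  obtain l1 r2 where round1: "(l1, r1) \<in> marked Hs EB" "(l1, r2) \<in> marked Hs EA"
      "walk (t + q + 2 * q) = Lv l1 q" "walk (t + 2 * q + 2 * q) = Rv r2 1"
    using walk_round[OF round0(4)] by (auto simp: ac_simps)
  have len2: "length vs \<noteq> 2 * q"
  proof
    assume "length vs = 2 * q"
    then have "r1 = r0" using walk_periodic[of t] r0 round0(4) by simp
    then show False using disjoint round0(1,2) by blast
  qed
  have len4: "length vs \<noteq> 4 * q"
  proof
    assume len: "length vs = 4 * q"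
    then have "r2 = r0" using walk_periodic[of t] r0 round1(4) by (simp add: add.assoc)
    moreover have "r1 \<noteq> r0" "l1 \<noteq> l0"
      using walk_shift_neq[of "2 * q" t] walk_shift_neq[of "2 * q" "t + q"]
        len q_pos r0 round0(3,4) round1(3) by auto
    ultimately show False
      using no_short_cycle_square_degenerate[OF no_short, of l0 r0 r1 l1] round0 round1
        marked_subset by blast
  qed
  obtain c where c: "length vs = 2 * q * c"
    using two_q_dvd_length by blast
  moreover have "c \<noteq> 0" "c \<noteq> 1" "c \<noteq> 2"
    using length_pos len2 len4 by (auto simp: c)
  ultimately have "3 \<le> c"
    by linarith
  then show ?thesis
    using c by simp
qed

end

lemma Gedge_cycleI: "1 \<le> q \<Longrightarrow> dcycle (Gedge a q Hs EA EB) vs \<Longrightarrow> Gedge_cycle a q Hs EA EB vs"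
  by unfold_locales

lemma dgirth_Gedge_common_marked:
  assumes q: "1 \<le> q" and H: "bip_edges_ok a (set Hs)"
    and lr: "(l, r) \<in> marked Hs EA \<inter> marked Hs EB"
  shows "dgirth (Gedge a q Hs EA EB) = enat (2 * q)"
proof (rule antisym)
  have "l < a" "r < a"
    using lr marked_subset H unfolding bip_edges_ok_def by blast+
  then show "dgirth (Gedge a q Hs EA EB) \<le> enat (2 * q)"
    using dgirth_le[OF dcycle_through_marked_edge[OF q lr]] by simp
  show "enat (2 * q) \<le> dgirth (Gedge a q Hs EA EB)"
    using Gedge_cycle.length_ge_2q[OF Gedge_cycleI[OF q]] by (rule dgirth_geI)
qed

lemma dgirth_Gedge_disjoint_marked:
  assumes "1 \<le> q" "no_short_cycle (set Hs)" "marked Hs EA \<inter> marked Hs EB = {}"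
  shows "enat (6 * q) \<le> dgirth (Gedge a q Hs EA EB)"
  using Gedge_cycle.length_ge_6q[OF Gedge_cycleI[OF assms(1)] assms(3,2)] by (rule dgirth_geI)

theorem mainTheorem6:
  fixes a q :: nat and Hs :: "(nat \<times> nat) list" and EA EB :: "bool list"
  assumes "a \<ge> 1" and "q \<ge> 1"
    and "distinct Hs" and "bip_edges_ok a (set Hs)"
    and "no_short_cycle (set Hs)"
    and "\<forall>F. bip_edges_ok a F \<and> no_short_cycle F \<longrightarrow> card F \<le> card (set Hs)"
    and "length EA = length Hs" and "length EB = length Hs"
  shows "((\<exists>j < length Hs. EA ! j \<and> EB ! j) \<longrightarrow>
            dgirth (Gedge a q Hs EA EB) = enat (2 * q))
       \<and> ((\<not> (\<exists>j < length Hs. EA ! j \<and> EB ! j)) \<longrightarrow>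
            dgirth (Gedge a q Hs EA EB) \<ge> enat (6 * q))"
proof (intro conjI impI)
  assume "\<exists>j < length Hs. EA ! j \<and> EB ! j"
  then have "marked Hs EA \<inter> marked Hs EB \<noteq> {}"
    using marked_disjoint_iff[OF assms(3), of EA EB] by blast
  then obtain l r where "(l, r) \<in> marked Hs EA \<inter> marked Hs EB"
    by auto
  then show "dgirth (Gedge a q Hs EA EB) = enat (2 * q)"
    by (rule dgirth_Gedge_common_marked[OF assms(2,4)])
next
  assume "\<not> (\<exists>j < length Hs. EA ! j \<and> EB ! j)"
  then have "marked Hs EA \<inter> marked Hs EB = {}"
    using marked_disjoint_iff[OF assms(3), of EA EB] by blast
  then show "enat (6 * q) \<le> dgirth (Gedge a q Hs EA EB)"
    by (rule dgirth_Gedge_disjoint_marked[OF assms(2,5)])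
qed

end
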